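(* Let $v=\sum_{\alpha\in\{0,1\}^n}f_\alpha\omega_\alpha\in\mathcal P^\omega_n$ with $f_\alpha\in\mathcal P_n$. Then $v\in\Lambda^\omega_n$ if and only if for every $i=1,\dots,n-1$ and every $\alpha\in\{0,1\}^n$: $$\partial_i(f_\alpha)=\begin{cases}0 & \alpha\notin J_i,\\ f_{s_i(\alpha)} & \alpha\in J_i.\end{cases}$$
   Context: Let $\mathcal P_n=\mathbb Q[x_1,\dots,x_n]$ and $\mathcal P^\omega_n=\mathcal P_n\otimes\bigwedge[\omega_1,\dots,\omega_n]$ ($\omega_i$ odd, commuting with the $x_j$). $S_n$ acts on $\mathcal P^\omega_n$ by ring automorphisms via $s_i(x_j)=x_{s_i(j)}$, $s_i(\omega_j)=\omega_j+\delta_{ij}(x_j-x_{j+1})\omega_{j+1}$; $\Lambda^\omega_n=(\mathcal P^\omega_n)^{S_n}$. On $\mathcal P_n$, $\partial_i=(1-s_i)/(x_i-x_{i+1})$ is the usual divided difference. For $\alpha\in\{0,1\}^n$, $\omega_\alpha=\omega_1^{\alpha_1}\cdots\omega_n^{\alpha_n}$; $s_i(\alpha)$ is $\alpha$ with entries $i,i+1$ swapped; $J_i=\{\alpha:\alpha_i=0,\alpha_{i+1}=1\}$. *)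

theory Defs
  imports Complex_Main "HOL-Library.Poly_Mapping"
begin

type_synonym qpoly = "(nat \<Rightarrow>\<^sub>0 nat) \<Rightarrow>\<^sub>0 rat"

definition var :: "nat \<Rightarrow> qpoly" where
  "var j = Poly_Mapping.single (Poly_Mapping.single j 1) 1"

definition in_Pn :: "nat \<Rightarrow> qpoly \<Rightarrow> bool" where
  "in_Pn n f \<longleftrightarrow> (\<forall>m \<in> Poly_Mapping.keys f. Poly_Mapping.keys m \<subseteq> {1..n})"

definition sidx :: "nat \<Rightarrow> nat \<Rightarrow> nat" where
  "sidx i k = (if k = i then Suc i else if k = Suc i then i else k)"

definition smono :: "nat \<Rightarrow> (nat \<Rightarrow>\<^sub>0 nat) \<Rightarrow> (nat \<Rightarrow>\<^sub>0 nat)" where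
  "smono i m = Abs_poly_mapping (\<lambda>k. Poly_Mapping.lookup m (sidx i k))"

definition spoly :: "nat \<Rightarrow> qpoly \<Rightarrow> qpoly" where
  "spoly i f = Abs_poly_mapping (\<lambda>m. Poly_Mapping.lookup f (smono i m))"

text \<open>Divided difference: \<partial>_i f = (f - s_i f)/(x_i - x_{i+1}), the (unique) exact quotient.\<close>
definition ddiff :: "nat \<Rightarrow> qpoly \<Rightarrow> qpoly" where
  "ddiff i f = (THE g. (var i - var (Suc i)) * g = f - spoly i f)"

text \<open>An element is represented by its coefficient function: the coefficient of
  \<omega>_\<alpha> = \<omega>_{a_1}...\<omega>_{a_k} (a_1 < ... < a_k, \<alpha> = {a_1,...,a_k}) is u \<alpha>.
  The multi-index \<alpha> \<in> {0,1}^n is identified with the set {j. \<alpha>_j = 1} \<subseteq> {1..n}.\<close>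

type_synonym sqpoly = "nat set \<Rightarrow> qpoly"

definition szero :: sqpoly where "szero = (\<lambda>A. 0)"
definition sone :: sqpoly where "sone = (\<lambda>A. if A = {} then 1 else 0)"
definition sconst :: "qpoly \<Rightarrow> sqpoly" where "sconst p = (\<lambda>A. if A = {} then p else 0)"
definition omega :: "nat \<Rightarrow> sqpoly" where "omega j = (\<lambda>A. if A = {j} then 1 else 0)"

definition sadd :: "sqpoly \<Rightarrow> sqpoly \<Rightarrow> sqpoly" where
  "sadd u v = (\<lambda>A. u A + v A)"

definition ssum :: "'a set \<Rightarrow> ('a \<Rightarrow> sqpoly) \<Rightarrow> sqpoly" where
  "ssum S F = (\<lambda>A. \<Sum>a\<in>S. F a A)"

text \<open>Sign of the shuffle bringing \<omega>_A \<omega>_B (A, B disjoint) into increasing order.\<close>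
definition shuffle_sign :: "nat set \<Rightarrow> nat set \<Rightarrow> qpoly" where
  "shuffle_sign A B = (-1) ^ card {(a, b). a \<in> A \<and> b \<in> B \<and> b < a}"

text \<open>Product in P_n \<otimes> \<Lambda>[\<omega>] (the \<omega>_i odd, commuting with the x_j).\<close>
definition smult :: "sqpoly \<Rightarrow> sqpoly \<Rightarrow> sqpoly" where
  "smult u v = (\<lambda>C. \<Sum>A\<in>Pow C. shuffle_sign A (C - A) * u A * v (C - A))"

definition sprod_ord :: "nat set \<Rightarrow> (nat \<Rightarrow> sqpoly) \<Rightarrow> sqpoly" where
  "sprod_ord \<alpha> F = foldr (\<lambda>j acc. smult (F j) acc) (sorted_list_of_set \<alpha>) sone"

definition omega_mon :: "nat set \<Rightarrow> sqpoly" where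
  "omega_mon \<alpha> = sprod_ord \<alpha> omega"

definition superpoly :: "nat \<Rightarrow> (nat set \<Rightarrow> qpoly) \<Rightarrow> sqpoly" where
  "superpoly n f = ssum (Pow {1..n}) (\<lambda>\<alpha>. smult (sconst (f \<alpha>)) (omega_mon \<alpha>))"

definition somega :: "nat \<Rightarrow> nat \<Rightarrow> sqpoly" where
  "somega i j = (if j = i then sadd (omega j) (smult (sconst (var j - var (Suc j))) (omega (Suc j)))
                 else omega j)"

text \<open>s_i acting on P^\<omega>_n as the ring automorphism determined by its values on the
  generators x_j and \<omega>_j:  s_i(\<Sum> f_\<alpha> \<omega>_\<alpha>) = \<Sum> s_i(f_\<alpha>) s_i(\<omega>_{a_1}) ... s_i(\<omega>_{a_k}).\<close>
definition sact :: "nat \<Rightarrow> nat \<Rightarrow> sqpoly \<Rightarrow> sqpoly" where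
  "sact n i v = ssum (Pow {1..n})
     (\<lambda>\<alpha>. smult (sconst (spoly i (v \<alpha>))) (sprod_ord \<alpha> (somega i)))"

text \<open>\<Lambda>^\<omega>_n: invariants of S_n, i.e. of its generators s_1,...,s_{n-1}.\<close>
definition in_Lambda :: "nat \<Rightarrow> sqpoly \<Rightarrow> bool" where
  "in_Lambda n v \<longleftrightarrow> (\<forall>i. 1 \<le> i \<and> i < n \<longrightarrow> sact n i v = v)"

definition Jset :: "nat \<Rightarrow> nat set set" where
  "Jset i = {\<alpha>. i \<notin> \<alpha> \<and> Suc i \<in> \<alpha>}"

definition sset :: "nat \<Rightarrow> nat set \<Rightarrow> nat set" where
  "sset i \<alpha> = sidx i ` \<alpha>"

end

theory Submission imports Defs begin

text \<open>Compare coefficients of \<omega>_C. The generator \<omega>_j is fixed by s_i unless j = i, and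
  s_i(\<omega>_i) = \<omega>_i + (x_i - x_{i+1}) \<omega>_{i+1}; since \<omega>_{i+1}^2 = 0, s_i(\<omega>_\<alpha>) is \<omega>_\<alpha> plus
  (x_i - x_{i+1}) \<omega>_{s_i \<alpha>} exactly when s_i(\<alpha>) \<in> J_i. So the coefficient of \<omega>_\<alpha> in s_i v is
  s_i f_\<alpha> + [\<alpha> \<in> J_i] (x_i - x_{i+1}) s_i f_{s_i \<alpha>}. For \<alpha> \<notin> J_i invariance thus means s_i f_\<alpha> = f_\<alpha>,
  i.e. \<partial>_i f_\<alpha> = 0; for \<alpha> \<in> J_i the partner s_i(\<alpha>) \<notin> J_i is symmetric, and invariance means
  f_\<alpha> - s_i f_\<alpha> = (x_i - x_{i+1}) f_{s_i \<alpha>}, i.e. \<partial>_i f_\<alpha> = f_{s_i \<alpha>}. Here \<partial>_i is the exact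
  quotient because x_i - x_{i+1} divides m - s_i m for every monomial m.\<close>

lemma sidx_sidx [simp]: "sidx i (sidx i k) = k"
  by (auto simp: sidx_def)

lemma lookup_smono: "Poly_Mapping.lookup (smono i m) k = Poly_Mapping.lookup m (sidx i k)"
proof -
  have "{k. Poly_Mapping.lookup m (sidx i k) \<noteq> 0} \<subseteq> sidx i ` Poly_Mapping.keys m"
    by (auto simp: in_keys_iff intro!: image_eqI[where x="sidx i _"])
  then have "finite {k. Poly_Mapping.lookup m (sidx i k) \<noteq> 0}"
    by (rule finite_subset) simp
  then show ?thesis by (simp add: smono_def)
qed

lemma smono_smono [simp]: "smono i (smono i m) = m"
  by (rule poly_mapping_eqI) (simp add: lookup_smono)

lemma lookup_spoly: "Poly_Mapping.lookup (spoly i f) m = Poly_Mapping.lookup f (smono i m)"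
proof -
  have "{m. Poly_Mapping.lookup f (smono i m) \<noteq> 0} \<subseteq> smono i ` Poly_Mapping.keys f"
    by (auto simp: in_keys_iff intro!: image_eqI[where x="smono i _"])
  then have "finite {m. Poly_Mapping.lookup f (smono i m) \<noteq> 0}"
    by (rule finite_subset) simp
  then show ?thesis by (simp add: spoly_def)
qed

lemma var_power: "var j ^ a = Poly_Mapping.single (Poly_Mapping.single j a) 1"
  by (induction a) (simp_all add: var_def mult_single single_add[symmetric] add.commute)

lemma diff_dvd_power_swap:
  fixes x y :: "'a::comm_ring_1"
  shows "(x - y) dvd (x ^ a * y ^ b - x ^ b * y ^ a)"
proof -
  have "x ^ a * y ^ b - x ^ b * y ^ a = y ^ b * (x ^ a - y ^ a) - y ^ a * (x ^ b - y ^ b)"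
    by (simp add: algebra_simps)
  then show ?thesis
    by (simp add: dvd_diff dvd_mult power_diff_sumr2)
qed

lemma smono_split:
  fixes m :: "nat \<Rightarrow>\<^sub>0 nat" and i :: nat
  defines "a \<equiv> Poly_Mapping.lookup m i" and "b \<equiv> Poly_Mapping.lookup m (Suc i)"
  defines "r \<equiv> m - Poly_Mapping.single i a - Poly_Mapping.single (Suc i) b"
  shows "m = r + Poly_Mapping.single i a + Poly_Mapping.single (Suc i) b"
    and "smono i m = r + Poly_Mapping.single i b + Poly_Mapping.single (Suc i) a"
  by (rule poly_mapping_eqI;
      auto simp: r_def a_def b_def lookup_add lookup_minus lookup_single when_def lookup_smono sidx_def)+

lemma var_diff_dvd_single_diff:
  "(var i - var (Suc i)) dvd (Poly_Mapping.single m c - Poly_Mapping.single (smono i m) c :: qpoly)"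
proof -
  obtain r a b where m: "m = r + Poly_Mapping.single i a + Poly_Mapping.single (Suc i) b"
    and sm: "smono i m = r + Poly_Mapping.single i b + Poly_Mapping.single (Suc i) a"
    using smono_split by blast
  have single_split: "Poly_Mapping.single (r + Poly_Mapping.single i a + Poly_Mapping.single (Suc i) b) c
      = (Poly_Mapping.single r c :: qpoly) * (var i ^ a * var (Suc i) ^ b)" for a b
    by (simp add: var_power mult_single add.assoc)
  have "Poly_Mapping.single m c - Poly_Mapping.single (smono i m) c
     = (Poly_Mapping.single r c :: qpoly) * (var i ^ a * var (Suc i) ^ b - var i ^ b * var (Suc i) ^ a)"
    by (subst (1) m, subst sm) (simp only: single_split right_diff_distrib)
  then show ?thesis by (simp add: diff_dvd_power_swap)
qed

lemma poly_mapping_eq_sum_single: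
  "f = (\<Sum>m\<in>Poly_Mapping.keys f. Poly_Mapping.single m (Poly_Mapping.lookup f m))"
  by (rule poly_mapping_eqI) (simp add: lookup_sum lookup_single when_def in_keys_iff)

lemma spoly_eq_sum_single:
  "spoly i f = (\<Sum>m\<in>Poly_Mapping.keys f. Poly_Mapping.single (smono i m) (Poly_Mapping.lookup f m))"
proof (rule poly_mapping_eqI)
  fix k
  have "(\<Sum>m\<in>Poly_Mapping.keys f. Poly_Mapping.lookup (Poly_Mapping.single (smono i m) (Poly_Mapping.lookup f m)) k)
      = (\<Sum>m\<in>Poly_Mapping.keys f. if m = smono i k then Poly_Mapping.lookup f m else 0)"
    by (rule sum.cong) (auto simp: lookup_single when_def)
  then show "Poly_Mapping.lookup (spoly i f) k
      = Poly_Mapping.lookup (\<Sum>m\<in>Poly_Mapping.keys f. Poly_Mapping.single (smono i m) (Poly_Mapping.lookup f m)) k"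
    by (simp add: lookup_spoly lookup_sum in_keys_iff)
qed

lemma var_diff_dvd_diff_spoly: "(var i - var (Suc i)) dvd (f - spoly i f)"
proof -
  have "f - spoly i f = (\<Sum>m\<in>Poly_Mapping.keys f.
      Poly_Mapping.single m (Poly_Mapping.lookup f m) - Poly_Mapping.single (smono i m) (Poly_Mapping.lookup f m))"
    by (subst (1) poly_mapping_eq_sum_single) (simp add: spoly_eq_sum_single sum_subtractf)
  then show ?thesis by (simp add: dvd_sum var_diff_dvd_single_diff)
qed

lemma var_diff_nonzero: "var i - var (Suc i) \<noteq> (0::qpoly)"
proof
  assume "var i - var (Suc i) = (0::qpoly)"
  then have "Poly_Mapping.lookup (var i - var (Suc i)) (Poly_Mapping.single i 1) = 0" by simp
  moreover have "Poly_Mapping.single (Suc i) (1::nat) \<noteq> Poly_Mapping.single i 1"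
    by (metis lookup_single_eq lookup_single_not_eq n_not_Suc_n one_neq_zero)
  ultimately show False by (simp add: var_def lookup_minus lookup_single when_def)
qed

lemma ddiff_eq_iff: "ddiff i f = g \<longleftrightarrow> (var i - var (Suc i)) * g = f - spoly i f"
proof -
  obtain q where q: "f - spoly i f = (var i - var (Suc i)) * q"
    using var_diff_dvd_diff_spoly by (meson dvdE)
  have unique: "h = q" if "(var i - var (Suc i)) * h = f - spoly i f" for h
    using q var_diff_nonzero that by simp
  have "ddiff i f = q"
    unfolding ddiff_def by (rule the_equality) (auto simp: q intro: unique)
  then show ?thesis using unique q by metis
qed

lemma ddiff_eq_0_iff: "ddiff i f = 0 \<longleftrightarrow> spoly i f = f"
  by (auto simp: ddiff_eq_iff)

lemma mem_sset: "k \<in> sset i \<alpha> \<longleftrightarrow> sidx i k \<in> \<alpha>"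
  unfolding sset_def by (metis image_iff sidx_sidx)

lemma sset_sset [simp]: "sset i (sset i \<alpha>) = \<alpha>"
  by (auto simp: mem_sset)

lemma finite_sset [simp]: "finite (sset i \<alpha>) \<longleftrightarrow> finite \<alpha>"
  by (metis finite_imageI sset_def sset_sset)

lemma sset_subset_atLeastAtMost_iff:
  assumes "1 \<le> i" "i < n"
  shows "sset i \<alpha> \<subseteq> {1..n} \<longleftrightarrow> \<alpha> \<subseteq> {1..n}"
proof -
  have "k \<in> {1..n} \<longleftrightarrow> sidx i k \<in> {1..n}" for k
    using assms by (auto simp: sidx_def)
  then have "sset i \<alpha> \<subseteq> {1..n}" if "\<alpha> \<subseteq> {1..n}" for \<alpha>
    using that by (auto simp: mem_sset)
  then show ?thesis by (metis sset_sset)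
qed

lemma sset_Jset: "\<alpha> \<in> Jset i \<Longrightarrow> sset i \<alpha> \<notin> Jset i \<and> sset i \<alpha> \<noteq> \<alpha>"
  by (auto simp: Jset_def mem_sset sidx_def)

lemma eq_sset_iff_Jset:
  "i \<in> \<alpha> \<and> Suc i \<notin> \<alpha> \<and> C = sset i \<alpha> \<longleftrightarrow> C \<in> Jset i \<and> \<alpha> = sset i C"
  by (auto simp: Jset_def mem_sset sidx_def)

lemma shuffle_sign_singleton_less:
  assumes "\<forall>b\<in>B. k < b"
  shows "shuffle_sign {k} B = 1"
proof -
  have "{(a, b). a \<in> {k} \<and> b \<in> B \<and> b < a} = {}"
    using assms by auto
  then show ?thesis by (simp only: shuffle_sign_def card.empty power_0)
qed

lemma smult_sconst_apply: "smult (sconst p) u C = (if finite C then p * u C else 0)"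
proof (cases "finite C")
  case True
  have "smult (sconst p) u C = (\<Sum>A\<in>Pow C. if A = {} then p * u C else 0)"
    unfolding smult_def sconst_def by (rule sum.cong) (auto simp: shuffle_sign_def)
  then show ?thesis using True by simp
qed (simp add: smult_def)

lemma smult_apply_singleton_supported:
  assumes "\<And>A. u A \<noteq> 0 \<Longrightarrow> \<exists>k. A = {k}"
  shows "smult u w C =
    (if finite C then \<Sum>k\<in>C. shuffle_sign {k} (C - {k}) * u {k} * w (C - {k}) else 0)"
proof (cases "finite C")
  case True
  let ?g = "\<lambda>A. shuffle_sign A (C - A) * u A * w (C - A)"
  have "smult u w C = sum ?g (Pow C)" by (simp add: smult_def)
  also have "\<dots> = sum ?g ((\<lambda>k. {k}) ` C)"
    by (rule sum.mono_neutral_right) (use True assms in auto)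
  also have "\<dots> = (\<Sum>k\<in>C. ?g {k})"
    by (subst sum.reindex) (auto simp: inj_on_def)
  finally show ?thesis using True by simp
qed (simp add: smult_def)

definition sgen :: "qpoly \<Rightarrow> nat \<Rightarrow> nat \<Rightarrow> sqpoly" where
  "sgen d i j = (\<lambda>A. if A = {j} then 1 else if A = {Suc j} \<and> j = i then d else 0)"

definition smon :: "qpoly \<Rightarrow> nat \<Rightarrow> nat set \<Rightarrow> sqpoly" where
  "smon d i \<alpha> = (\<lambda>C. if C = \<alpha> then 1 else if i \<in> \<alpha> \<and> Suc i \<notin> \<alpha> \<and> C = sset i \<alpha> then d else 0)"

lemma shuffle_smult_smon_insert:
  assumes S: "finite S" "\<forall>s\<in>S. j < s"
  shows "(if j \<in> C then shuffle_sign {j} (C - {j}) * smon d i S (C - {j}) else 0)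
       = (if C = insert j S then 1 else if i \<in> S \<and> Suc i \<notin> S \<and> C = insert j (sset i S) then d else 0)"
proof (cases "j \<in> C")
  case True
  have jS: "j \<notin> S" using S by auto
  have less_sset: "\<forall>b\<in>sset i S. j < b" if "i \<in> S" "Suc i \<notin> S"
  proof
    fix b assume "b \<in> sset i S"
    then have "sidx i b \<in> S" by (simp add: mem_sset)
    with S that show "j < b" by (auto simp: sidx_def split: if_splits)
  qed
  show ?thesis
  proof (cases "C = insert j S")
    case True
    then have "C - {j} = S" using jS by auto
    then show ?thesis using True S shuffle_sign_singleton_less[of S j] by (simp add: smon_def)
  next
    case False
    then show ?thesis using jS less_sset \<open>j \<in> C\<close> shuffle_sign_singleton_less[of "sset i S" j]
      by (auto simp: smon_def)
  qed
qed auto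

lemma shuffle_smult_smon_insert_Suc:
  assumes S: "finite S" "\<forall>s\<in>S. i < s"
  shows "(if Suc i \<in> C then shuffle_sign {Suc i} (C - {Suc i}) * d * smon d i S (C - {Suc i}) else 0)
       = (if Suc i \<notin> S \<and> C = insert (Suc i) S then d else 0)"
proof (cases "Suc i \<in> C \<and> Suc i \<notin> S \<and> C = insert (Suc i) S")
  case True
  then have "C - {Suc i} = S" by auto
  moreover have "\<forall>b\<in>S. Suc i < b" using S True by (metis Suc_lessI)
  ultimately show ?thesis using True shuffle_sign_singleton_less[of S "Suc i"] by (simp add: smon_def)
next
  case False
  have "i \<notin> S" using S by auto
  then show ?thesis using False by (auto simp: smon_def)
qed

lemma smult_sgen_apply:
  assumes "finite C"
  shows "smult (sgen d i j) w C =
    (if j \<in> C then shuffle_sign {j} (C - {j}) * w (C - {j}) else 0)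
    + (if j = i then (if Suc i \<in> C then shuffle_sign {Suc i} (C - {Suc i}) * d * w (C - {Suc i}) else 0) else 0)"
proof -
  have "smult (sgen d i j) w C = (\<Sum>k\<in>C. shuffle_sign {k} (C - {k}) * sgen d i j {k} * w (C - {k}))"
    using assms by (subst smult_apply_singleton_supported) (auto simp: sgen_def split: if_splits)
  also have "\<dots> = (\<Sum>k\<in>C. (if k = j then shuffle_sign {j} (C - {j}) * w (C - {j}) else 0)
      + (if k = Suc i \<and> j = i then shuffle_sign {Suc i} (C - {Suc i}) * d * w (C - {Suc i}) else 0))"
    by (rule sum.cong) (auto simp: sgen_def)
  finally show ?thesis
    using assms by (simp add: sum.distrib)
qed

lemma smult_sgen_smon:
  assumes S: "finite S" "\<forall>s\<in>S. j < s"
  shows "smult (sgen d i j) (smon d i S) = smon d i (insert j S)"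
proof
  fix C
  show "smult (sgen d i j) (smon d i S) C = smon d i (insert j S) C"
  proof (cases "finite C")
    case False
    then have "C \<noteq> insert j S" "C \<noteq> sset i (insert j S)" using S by auto
    with False show ?thesis
      by (subst smult_apply_singleton_supported) (auto simp: sgen_def smon_def)
  next
    case True
    note expand = smult_sgen_apply[OF True, of d i j "smon d i S"]
    consider "j = i" | "j = Suc i" | "j \<noteq> i" "j \<noteq> Suc i" by blast
    then show ?thesis
    proof cases
      case 1
      then have "i \<notin> S" using S by auto
      then have "Suc i \<notin> S \<Longrightarrow> sset i (insert i S) = insert (Suc i) S"
        by (auto simp: mem_sset sidx_def split: if_splits)
      with 1 S \<open>i \<notin> S\<close> show ?thesis
        using shuffle_smult_smon_insert[OF S, of C d i] shuffle_smult_smon_insert_Suc[of S i C d]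
        unfolding expand by (auto simp: smon_def)
    next
      case 2
      then have "i \<notin> S" using S by auto
      with 2 show ?thesis
        using shuffle_smult_smon_insert[OF S, of C d i] unfolding expand by (auto simp: smon_def)
    next
      case 3
      then have "sset i (insert j S) = insert j (sset i S)"
        by (auto simp: mem_sset sidx_def)
      with 3 show ?thesis
        using shuffle_smult_smon_insert[OF S, of C d i] unfolding expand by (auto simp: smon_def)
    qed
  qed
qed

lemma sprod_ord_sgen: "finite \<alpha> \<Longrightarrow> sprod_ord \<alpha> (sgen d i) = smon d i \<alpha>"
proof -
  have "foldr (\<lambda>j acc. smult (sgen d i j) acc) xs sone = smon d i (set xs)" if "sorted_wrt (<) xs" for xs
    using that
  proof (induction xs)
    case Nil
    show ?case by (auto simp: sone_def smon_def)
  next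
    case (Cons j xs)
    then show ?case by (simp add: smult_sgen_smon)
  qed
  then show "finite \<alpha> \<Longrightarrow> ?thesis" by (simp add: sprod_ord_def)
qed

lemma omega_eq_sgen: "omega = sgen 0 0"
  by (auto simp: fun_eq_iff omega_def sgen_def)

lemma somega_eq_sgen: "somega i = sgen (var i - var (Suc i)) i"
  by (auto simp: fun_eq_iff somega_def sgen_def sadd_def omega_def smult_sconst_apply)

lemma omega_mon_apply: "finite \<alpha> \<Longrightarrow> omega_mon \<alpha> C = (if C = \<alpha> then 1 else 0)"
  by (simp add: omega_mon_def omega_eq_sgen sprod_ord_sgen smon_def)

lemma superpoly_apply: "superpoly n f C = (if C \<subseteq> {1..n} then f C else 0)"
proof (cases "finite C")
  case True
  have "superpoly n f C = (\<Sum>\<alpha>\<in>Pow {1..n}. if \<alpha> = C then f \<alpha> else 0)"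
    unfolding superpoly_def ssum_def
  proof (rule sum.cong)
    fix \<alpha> assume "\<alpha> \<in> Pow {1..n}"
    then have "finite \<alpha>" by (auto intro: finite_subset)
    with True show "smult (sconst (f \<alpha>)) (omega_mon \<alpha>) C = (if \<alpha> = C then f \<alpha> else 0)"
      by (simp add: smult_sconst_apply omega_mon_apply)
  qed simp
  then show ?thesis by simp
next
  case False
  then have "\<not> C \<subseteq> {1..n}" using finite_subset by blast
  with False show ?thesis by (simp add: superpoly_def ssum_def smult_sconst_apply)
qed

lemma sact_apply:
  assumes i: "1 \<le> i" "i < n"
  shows "sact n i v C = (if C \<subseteq> {1..n} then spoly i (v C) +
     (if C \<in> Jset i then (var i - var (Suc i)) * spoly i (v (sset i C)) else 0) else 0)"
proof (cases "finite C")
  case True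
  let ?D = "var i - var (Suc i)"
  have "sact n i v C = (\<Sum>\<alpha>\<in>Pow {1..n}. (if \<alpha> = C then spoly i (v \<alpha>) else 0)
        + (if C \<in> Jset i then (if \<alpha> = sset i C then ?D * spoly i (v \<alpha>) else 0) else 0))"
    unfolding sact_def ssum_def
  proof (rule sum.cong)
    fix \<alpha> assume "\<alpha> \<in> Pow {1..n}"
    then have "finite \<alpha>" by (auto intro: finite_subset)
    with True show "smult (sconst (spoly i (v \<alpha>))) (sprod_ord \<alpha> (somega i)) C =
      (if \<alpha> = C then spoly i (v \<alpha>) else 0)
      + (if C \<in> Jset i then (if \<alpha> = sset i C then ?D * spoly i (v \<alpha>) else 0) else 0)"
      using sset_Jset[of C i] eq_sset_iff_Jset[of i \<alpha> C]
      by (auto simp: smult_sconst_apply somega_eq_sgen sprod_ord_sgen smon_def)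
  qed simp
  then show ?thesis
    using sset_subset_atLeastAtMost_iff[OF i, of C] by (auto simp: sum.distrib)
next
  case False
  then have "\<not> C \<subseteq> {1..n}" using finite_subset by blast
  with False show ?thesis by (simp add: sact_def ssum_def smult_sconst_apply)
qed

lemma sact_superpoly_eq_iff:
  assumes i: "1 \<le> i" "i < n"
  shows "sact n i (superpoly n f) = superpoly n f \<longleftrightarrow>
    (\<forall>\<alpha>\<in>Pow {1..n}. spoly i (f \<alpha>) +
       (if \<alpha> \<in> Jset i then (var i - var (Suc i)) * spoly i (f (sset i \<alpha>)) else 0) = f \<alpha>)"
  using sset_subset_atLeastAtMost_iff[OF i]
  by (auto simp: fun_eq_iff sact_apply[OF i] superpoly_apply)

lemma spoly_fixed_iff_ddiff:
  fixes g :: "nat set \<Rightarrow> qpoly"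
  assumes closed: "\<And>\<alpha>. \<alpha> \<in> P \<Longrightarrow> \<alpha> \<in> Jset i \<Longrightarrow> sset i \<alpha> \<in> P"
  shows "(\<forall>\<alpha>\<in>P. spoly i (g \<alpha>) +
            (if \<alpha> \<in> Jset i then (var i - var (Suc i)) * spoly i (g (sset i \<alpha>)) else 0) = g \<alpha>)
     \<longleftrightarrow> (\<forall>\<alpha>\<in>P. ddiff i (g \<alpha>) = (if \<alpha> \<in> Jset i then g (sset i \<alpha>) else 0))"
    (is "(\<forall>\<alpha>\<in>P. ?L \<alpha>) \<longleftrightarrow> (\<forall>\<alpha>\<in>P. ?R \<alpha>)")
proof -
  have outside_J: "?L \<alpha> \<longleftrightarrow> ?R \<alpha>" if "\<alpha> \<notin> Jset i" for \<alpha>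
    using that by (auto simp: ddiff_eq_0_iff)
  have inside_J: "?L \<alpha> \<longleftrightarrow> ?R \<alpha>" if "\<alpha> \<in> Jset i" "spoly i (g (sset i \<alpha>)) = g (sset i \<alpha>)" for \<alpha>
    using that by (auto simp: ddiff_eq_iff algebra_simps)
  have partner: "?L (sset i \<alpha>) \<longleftrightarrow> spoly i (g (sset i \<alpha>)) = g (sset i \<alpha>)"
    "?R (sset i \<alpha>) \<longleftrightarrow> spoly i (g (sset i \<alpha>)) = g (sset i \<alpha>)" if "\<alpha> \<in> Jset i" for \<alpha>
    using sset_Jset[OF that] by (auto simp: ddiff_eq_0_iff)
  show ?thesis
    using outside_J inside_J partner closed by metis
qed

theorem proposition3p2:
  fixes n :: nat and f :: "nat set \<Rightarrow> qpoly"
  assumes "\<forall>\<alpha>. in_Pn n (f \<alpha>)"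
  shows "in_Lambda n (superpoly n f) \<longleftrightarrow>
    (\<forall>i. 1 \<le> i \<and> i < n \<longrightarrow> (\<forall>\<alpha> \<in> Pow {1..n}.
       ddiff i (f \<alpha>) = (if \<alpha> \<in> Jset i then f (sset i \<alpha>) else 0)))"
proof -
  have "sact n i (superpoly n f) = superpoly n f \<longleftrightarrow>
     (\<forall>\<alpha> \<in> Pow {1..n}. ddiff i (f \<alpha>) = (if \<alpha> \<in> Jset i then f (sset i \<alpha>) else 0))"
    if i: "1 \<le> i" "i < n" for i
    unfolding sact_superpoly_eq_iff[OF i]
    by (rule spoly_fixed_iff_ddiff) (use sset_subset_atLeastAtMost_iff[OF i] in auto)
  then show ?thesis
    unfolding in_Lambda_def by auto
qed

end
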